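(* Let $A$ be an algebra over a field $k$ of characteristic $0$ with a double bracket $\{\!\{-,-\}\!\}$, associated bracket $\{a,b\}=\{\!\{a,b\}\!\}'\{\!\{a,b\}\!\}''$, and associated tri-ary operation $\{\!\{-,-,-\}\!\}$. Then for all $a,b,c\in A$ the following identity holds in $A\otimes A$: \[\{a,\{\!\{b,c\}\!\}\}-\{\!\{\{a,b\},c\}\!\}-\{\!\{b,\{a,c\}\}\!\}=(m\otimes1)\{\!\{a,b,c\}\!\}-(1\otimes m)\{\!\{b,a,c\}\!\},\] where $m$ is multiplication of $A$ and $\{a,-\}$ acts on tensors by $\{a,u\otimes v\}=\{a,u\}\otimes v+u\otimes\{a,v\}$.
   Context: Unadorned tensor products are over $k$; $x\in V\otimes W$ is written $x'\otimes x''$ (summation suppressed), $x^\circ=x''\otimes x'$, and $\tau_s(a_1\otimes\cdots\otimes a_n)=a_{s^{-1}(1)}\otimes\cdots\otimes a_{s^{-1}(n)}$ for $s\in S_n$. A double bracket on $A$ is a bilinear map $\{\!\{-,-\}\!\}:A\times A\to A\otimes A$ with $\{\!\{a,bc\}\!\}=b\{\!\{a,c\}\!\}+\{\!\{a,b\}\!\}c$ (outer bimodule structure $b(x\otimes y)c=bx\otimes yc$) and $\{\!\{a,b\}\!\}=-\{\!\{b,a\}\!\}^\circ$. For $a\in A$, $b=b_1\otimes\cdots\otimes b_n$, $\{\!\{a,b\}\!\}_L=\{\!\{a,b_1\}\!\}\otimes b_2\otimes\cdots\otimes b_n$. The associated tri-ary operation is $\{\!\{a,b,c\}\!\}=\{\!\{a,\{\!\{b,c\}\!\}\}\!\}_L+\tau_{(123)}\{\!\{b,\{\!\{c,a\}\!\}\}\!\}_L+\tau_{(132)}\{\!\{c,\{\!\{a,b\}\!\}\}\!\}_L$.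 *)

theory Defs
  imports Main "HOL-Analysis.Analysis"
begin

text \<open>An element of A \<otimes> A is represented by a finite
 list of pairs (x,y) standing for the sum of the x \<otimes> y; an element of A \<otimes> A \<otimes> A by a
 list of triples. Two representatives denote the same element of A \<otimes> A iff they pair
 equally with all products of linear functionals (the canonical map
 A \<otimes> A \<rightarrow> (A* \<times> A* \<rightarrow> k) is injective over a field).\<close>

definition lin_fun :: "('k::field \<Rightarrow> 'a::ab_group_add \<Rightarrow> 'a) \<Rightarrow> ('a \<Rightarrow> 'k) \<Rightarrow> bool" where
  "lin_fun sc \<phi> \<longleftrightarrow> (\<forall>x y. \<phi> (x + y) = \<phi> x + \<phi> y) \<and> (\<forall>c x. \<phi> (sc c x) = c * \<phi> x)"

definition ev2 :: "('a \<Rightarrow> 'k::field) \<Rightarrow> ('a \<Rightarrow> 'k) \<Rightarrow> ('a \<times> 'a) list \<Rightarrow> 'k" where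
  "ev2 \<phi> \<psi> t = (\<Sum>(x, y)\<leftarrow>t. \<phi> x * \<psi> y)"

definition teq2 :: "('k::field \<Rightarrow> 'a::ab_group_add \<Rightarrow> 'a) \<Rightarrow> ('a \<times> 'a) list \<Rightarrow> ('a \<times> 'a) list \<Rightarrow> bool" where
  "teq2 sc s t \<longleftrightarrow> (\<forall>\<phi> \<psi>. lin_fun sc \<phi> \<longrightarrow> lin_fun sc \<psi> \<longrightarrow> ev2 \<phi> \<psi> s = ev2 \<phi> \<psi> t)"

definition k_algebra :: "('k::field \<Rightarrow> 'a::ring_1 \<Rightarrow> 'a) \<Rightarrow> bool" where
  "k_algebra sc \<longleftrightarrow> vector_space sc \<and>
     (\<forall>c x y. sc c (x * y) = sc c x * y \<and> sc c (x * y) = x * sc c y)"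

definition smult2 :: "('k \<Rightarrow> 'a \<Rightarrow> 'a) \<Rightarrow> 'k \<Rightarrow> ('a \<times> 'a) list \<Rightarrow> ('a \<times> 'a) list" where
  "smult2 sc c t = map (\<lambda>(x, y). (sc c x, y)) t"

definition neg2 :: "('a::ab_group_add \<times> 'a) list \<Rightarrow> ('a \<times> 'a) list" where
  "neg2 t = map (\<lambda>(x, y). (- x, y)) t"

definition flip2 :: "('a \<times> 'a) list \<Rightarrow> ('a \<times> 'a) list" where
  "flip2 t = map (\<lambda>(x, y). (y, x)) t"

definition is_double_bracket ::
  "('k::field \<Rightarrow> 'a::ring_1 \<Rightarrow> 'a) \<Rightarrow> ('a \<Rightarrow> 'a \<Rightarrow> ('a \<times> 'a) list) \<Rightarrow> bool" where
  "is_double_bracket sc D \<longleftrightarrow>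
     (\<forall>a a' b. teq2 sc (D (a + a') b) (D a b @ D a' b)) \<and>
     (\<forall>a b b'. teq2 sc (D a (b + b')) (D a b @ D a b')) \<and>
     (\<forall>c a b. teq2 sc (D (sc c a) b) (smult2 sc c (D a b))) \<and>
     (\<forall>c a b. teq2 sc (D a (sc c b)) (smult2 sc c (D a b))) \<and>
     (\<forall>a b c. teq2 sc (D a (b * c))
        (map (\<lambda>(x, y). (b * x, y)) (D a c) @ map (\<lambda>(x, y). (x, y * c)) (D a b))) \<and>
     (\<forall>a b. teq2 sc (D a b) (neg2 (flip2 (D b a))))"

definition mult2 :: "('a::ring_1 \<times> 'a) list \<Rightarrow> 'a" where
  "mult2 t = (\<Sum>(x, y)\<leftarrow>t. x * y)"

definition br :: "('a::ring_1 \<Rightarrow> 'a \<Rightarrow> ('a \<times> 'a) list) \<Rightarrow> 'a \<Rightarrow> 'a \<Rightarrow> 'a" where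
  "br D a b = mult2 (D a b)"

definition brT :: "('a::ring_1 \<Rightarrow> 'a \<Rightarrow> ('a \<times> 'a) list) \<Rightarrow> 'a \<Rightarrow> ('a \<times> 'a) list \<Rightarrow> ('a \<times> 'a) list" where
  "brT D a t = concat (map (\<lambda>(u, v). [(br D a u, v), (u, br D a v)]) t)"

definition dblL :: "('a \<Rightarrow> 'a \<Rightarrow> ('a \<times> 'a) list) \<Rightarrow> 'a \<Rightarrow> ('a \<times> 'a) list \<Rightarrow> ('a \<times> 'a \<times> 'a) list" where
  "dblL D a t = concat (map (\<lambda>(x, y). map (\<lambda>(p, q). (p, q, y)) (D a x)) t)"

text \<open>tau_s (a1 \<otimes> a2 \<otimes> a3) = a_{s^-1(1)} \<otimes> a_{s^-1(2)} \<otimes> a_{s^-1(3)}.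
 For s = (123): a3 \<otimes> a1 \<otimes> a2; for s = (132): a2 \<otimes> a3 \<otimes> a1.\<close>
definition tau123 :: "'a \<times> 'a \<times> 'a \<Rightarrow> 'a \<times> 'a \<times> 'a" where
  "tau123 = (\<lambda>(x1, x2, x3). (x3, x1, x2))"

definition tau132 :: "'a \<times> 'a \<times> 'a \<Rightarrow> 'a \<times> 'a \<times> 'a" where
  "tau132 = (\<lambda>(x1, x2, x3). (x2, x3, x1))"

definition tri :: "('a \<Rightarrow> 'a \<Rightarrow> ('a \<times> 'a) list) \<Rightarrow> 'a \<Rightarrow> 'a \<Rightarrow> 'a \<Rightarrow> ('a \<times> 'a \<times> 'a) list" where
  "tri D a b c = dblL D a (D b c) @ map tau123 (dblL D b (D c a)) @ map tau132 (dblL D c (D a b))"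

definition m_1 :: "('a::ring_1 \<times> 'a \<times> 'a) list \<Rightarrow> ('a \<times> 'a) list" where
  "m_1 t = map (\<lambda>(x, y, z). (x * y, z)) t"

definition one_m :: "('a::ring_1 \<times> 'a \<times> 'a) list \<Rightarrow> ('a \<times> 'a) list" where
  "one_m t = map (\<lambda>(x, y, z). (x, y * z)) t"

end

theory Submission
  imports Defs
begin

text \<open>Both sides are elements of \<open>A \<otimes> A\<close>, so it suffices to compare their contractions with
  an arbitrary bilinear form \<open>F\<close>. Expanding \<open>{{{a,b},c}}\<close> and \<open>{{b,{a,c}}}\<close> by the Leibniz rule
  (after flipping the first with the cyclic antisymmetry), and the six terms of the two
  tri-ary operations by the definition of the bracket \<open>{a,-} = m {{a,-}}\<close> and by antisymmetry,
  both sides become the same combination of six iterated contractions against double brackets.\<close>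

definition bilin_form :: "('k::field \<Rightarrow> 'a::ab_group_add \<Rightarrow> 'a) \<Rightarrow> ('a \<Rightarrow> 'a \<Rightarrow> 'k) \<Rightarrow> bool" where
  "bilin_form sc F \<longleftrightarrow> (\<forall>y. lin_fun sc (\<lambda>x. F x y)) \<and> (\<forall>x. lin_fun sc (F x))"

definition contract :: "('a \<Rightarrow> 'a \<Rightarrow> 'k::comm_monoid_add) \<Rightarrow> ('a \<times> 'a) list \<Rightarrow> 'k" where
  "contract F t = (\<Sum>(x, y)\<leftarrow>t. F x y)"

definition contract3 :: "('a \<Rightarrow> 'a \<Rightarrow> 'a \<Rightarrow> 'k::comm_monoid_add) \<Rightarrow> ('a \<times> 'a \<times> 'a) list \<Rightarrow> 'k" where
  "contract3 G t = (\<Sum>(x, y, z)\<leftarrow>t. G x y z)"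

lemma lin_fun_add: "lin_fun sc \<phi> \<Longrightarrow> \<phi> (x + y) = \<phi> x + \<phi> y"
  by (simp add: lin_fun_def)

lemma lin_fun_scale: "lin_fun sc \<phi> \<Longrightarrow> \<phi> (sc c x) = c * \<phi> x"
  by (simp add: lin_fun_def)

lemma lin_fun_zero: "lin_fun sc \<phi> \<Longrightarrow> \<phi> 0 = 0"
  using lin_fun_add[of sc \<phi> 0 0] by (metis add_cancel_right_right add_0)

lemma lin_fun_uminus: "lin_fun sc \<phi> \<Longrightarrow> \<phi> (- x) = - \<phi> x"
  using lin_fun_add[of sc \<phi> x "- x"] lin_fun_zero[of sc \<phi>] by (metis add.commute eq_neg_iff_add_eq_0)

lemma lin_fun_sum: "lin_fun sc \<phi> \<Longrightarrow> \<phi> (sum f S) = (\<Sum>i\<in>S. \<phi> (f i))"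
  by (induction S rule: infinite_finite_induct) (auto simp: lin_fun_zero lin_fun_add)

lemma lin_fun_sum_list: "lin_fun sc \<phi> \<Longrightarrow> \<phi> (sum_list xs) = (\<Sum>x\<leftarrow>xs. \<phi> x)"
  by (induction xs) (auto simp: lin_fun_zero lin_fun_add)

lemma lin_fun_mult_left: "k_algebra sc \<Longrightarrow> lin_fun sc \<phi> \<Longrightarrow> lin_fun sc (\<lambda>x. \<phi> (p * x))"
  unfolding k_algebra_def lin_fun_def by (metis distrib_left)

lemma lin_fun_mult_right: "k_algebra sc \<Longrightarrow> lin_fun sc \<phi> \<Longrightarrow> lin_fun sc (\<lambda>x. \<phi> (x * q))"
  unfolding k_algebra_def lin_fun_def by (metis distrib_right)

lemma bilin_form_prod: "lin_fun sc \<phi> \<Longrightarrow> lin_fun sc \<psi> \<Longrightarrow> bilin_form sc (\<lambda>x y. \<phi> x * \<psi> y)"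
  by (simp add: bilin_form_def lin_fun_def algebra_simps)

lemma bilin_form_mult_left_fst:
  assumes "k_algebra sc" and "bilin_form sc F"
  shows "bilin_form sc (\<lambda>x y. F (p * x) y)"
  using assms lin_fun_mult_left[OF assms(1), of "\<lambda>x. F x _"] by (simp add: bilin_form_def)

lemma bilin_form_mult_left_snd:
  assumes "k_algebra sc" and "bilin_form sc F"
  shows "bilin_form sc (\<lambda>x y. F x (p * y))"
  using assms lin_fun_mult_left[OF assms(1), of "F _"] by (simp add: bilin_form_def)

lemma bilin_form_swap: "bilin_form sc F \<Longrightarrow> bilin_form sc (\<lambda>x y. F y x)"
  by (simp add: bilin_form_def)

lemma contract_simps [simp]:
  "contract F [] = 0"
  "contract F ((x, y) # t) = F x y + contract F t"
  "contract F (s @ t) = contract F s + contract F t"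
  by (simp_all add: contract_def)

lemma contract3_simps [simp]:
  "contract3 G [] = 0"
  "contract3 G ((x, y, z) # t) = G x y z + contract3 G t"
  "contract3 G (s @ t) = contract3 G s + contract3 G t"
  by (simp_all add: contract3_def)

lemma ev2_eq_contract: "ev2 \<phi> \<psi> t = contract (\<lambda>x y. \<phi> x * \<psi> y) t"
  by (simp add: ev2_def contract_def)

lemma contract_cong: "(\<And>x y. (x, y) \<in> set t \<Longrightarrow> F x y = G x y) \<Longrightarrow> contract F t = contract G t"
  by (induction t) auto

lemma contract_add: "contract (\<lambda>x y. F x y + G x y) t = contract F t + contract G t"
  by (induction t) (auto simp: algebra_simps)

lemma contract_sum:
  "finite E \<Longrightarrow> contract (\<lambda>x y. \<Sum>i\<in>E. G i x y) t = (\<Sum>i\<in>E. contract (G i) t)"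
  by (induction t) (auto simp: sum.distrib)

lemma contract_map:
  "contract F (map (\<lambda>(x, y). (f x y, g x y)) t) = contract (\<lambda>x y. F (f x y) (g x y)) t"
  by (induction t) auto

lemma contract_flip2: "contract F (flip2 t) = contract (\<lambda>x y. F y x) t"
  by (induction t) (auto simp: flip2_def)

lemma contract_neg2:
  assumes "bilin_form sc F"
  shows "contract F (neg2 t) = - contract F t"
proof -
  have "F (- x) y = - F x y" for x y
    using assms lin_fun_uminus[of sc "\<lambda>x. F x y"] by (simp add: bilin_form_def)
  then show ?thesis
    by (induction t) (auto simp: neg2_def)
qed

lemma contract_smult2:
  assumes "bilin_form sc F"
  shows "contract F (smult2 sc c t) = c * contract F t"
proof -
  have "F (sc c x) y = c * F x y" for x y
    using assms lin_fun_scale[of sc "\<lambda>x. F x y"] by (simp add: bilin_form_def)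
  then show ?thesis
    by (induction t) (auto simp: smult2_def algebra_simps)
qed

lemma lin_fun_contract:
  "(\<And>x y. lin_fun sc (\<lambda>q. G q x y)) \<Longrightarrow> lin_fun sc (\<lambda>q. contract (G q) t)"
  by (induction t) (auto simp: lin_fun_def algebra_simps)

lemma contract_brT:
  "contract F (brT D a t) = contract (\<lambda>u v. F (br D a u) v + F u (br D a v)) t"
  by (induction t) (auto simp: brT_def)

lemma contract_m_1: "contract F (m_1 t) = contract3 (\<lambda>x y z. F (x * y) z) t"
  by (induction t) (auto simp: m_1_def)

lemma contract_one_m: "contract F (one_m t) = contract3 (\<lambda>x y z. F x (y * z)) t"
  by (induction t) (auto simp: one_m_def)

lemma contract3_tau123: "contract3 G (map tau123 t) = contract3 (\<lambda>x y z. G z x y) t"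
  by (induction t) (auto simp: tau123_def)

lemma contract3_tau132: "contract3 G (map tau132 t) = contract3 (\<lambda>x y z. G y z x) t"
  by (induction t) (auto simp: tau132_def)

lemma contract3_dblL:
  "contract3 G (dblL D a t) = contract (\<lambda>u v. contract (\<lambda>p q. G p q v) (D a u)) t"
proof -
  have "contract3 G (map (\<lambda>(p, q). (p, q, v)) s) = contract (\<lambda>p q. G p q v) s" for s v
    by (induction s) auto
  then show ?thesis
    by (induction t) (auto simp: dblL_def)
qed

lemma lin_fun_mult2: "lin_fun sc \<phi> \<Longrightarrow> \<phi> (mult2 t) = contract (\<lambda>x y. \<phi> (x * y)) t"
  by (induction t) (auto simp: mult2_def lin_fun_zero lin_fun_add)

text \<open>Equality against all products \<open>\<phi> \<otimes> \<psi>\<close> extends to all bilinear forms: on the finitely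
  many first factors involved, \<open>F = (\<Sum>b\<in>E. r\<^sub>b \<otimes> F b)\<close> with \<open>r\<^sub>b\<close> the coordinate
  functionals of a basis.\<close>

lemma (in vector_space) teq2_imp_contract_eq:
  assumes "teq2 scale s t" and "bilin_form scale F"
  shows "contract F s = contract F t"
proof -
  define B where "B = extend_basis {}"
  have indB: "independent B" and spB: "span B = UNIV"
    using independent_extend_basis[OF independent_empty] span_extend_basis[OF independent_empty]
    by (auto simp: B_def)
  define r where "r x b = representation B x b" for x b
  have lin_r: "lin_fun scale (\<lambda>x. r x b)" for b
    unfolding lin_fun_def r_def using indB spB by (simp add: representation_add representation_scale)
  define X where "X = fst ` set (s @ t)"
  define E where "E = (\<Union>x\<in>X. {b. r x b \<noteq> 0})"
  have finE: "finite E"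
    unfolding E_def X_def r_def by (auto intro!: finite_representation)
  have F_expand: "F x y = (\<Sum>b\<in>E. r x b * F b y)" if "x \<in> X" for x y
  proof -
    have lin_F: "lin_fun scale (\<lambda>x. F x y)"
      using assms(2) by (simp add: bilin_form_def)
    have "(\<Sum>b\<in>E. r x b *s b) = (\<Sum>b | r x b \<noteq> 0. r x b *s b)"
      using that finE by (intro sum.mono_neutral_right) (auto simp: E_def)
    also have "\<dots> = x"
      unfolding r_def using indB spB by (intro sum_nonzero_representation_eq) auto
    finally have "F x y = F (\<Sum>b\<in>E. r x b *s b) y" by simp
    then show ?thesis
      by (simp add: lin_fun_sum[OF lin_F] lin_fun_scale[OF lin_F])
  qed
  have contract_expand: "contract F u = (\<Sum>b\<in>E. ev2 (\<lambda>x. r x b) (F b) u)"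
    if "fst ` set u \<subseteq> X" for u
  proof -
    have "contract F u = contract (\<lambda>x y. \<Sum>b\<in>E. r x b * F b y) u"
      using that by (intro contract_cong) (auto simp: F_expand)
    then show ?thesis
      using finE by (simp add: contract_sum ev2_eq_contract)
  qed
  have "contract F s = (\<Sum>b\<in>E. ev2 (\<lambda>x. r x b) (F b) s)"
    by (rule contract_expand) (auto simp: X_def)
  also have "\<dots> = (\<Sum>b\<in>E. ev2 (\<lambda>x. r x b) (F b) t)"
    using assms lin_r unfolding teq2_def bilin_form_def by auto
  also have "\<dots> = contract F t"
    by (rule contract_expand[symmetric]) (auto simp: X_def)
  finally show ?thesis .
qed

context
  fixes sc :: "'k::field \<Rightarrow> 'a::ring_1 \<Rightarrow> 'a" and D :: "'a \<Rightarrow> 'a \<Rightarrow> ('a \<times> 'a) list"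
  assumes alg: "k_algebra sc" and db: "is_double_bracket sc D"
begin

lemma teq2_contract: "teq2 sc s t \<Longrightarrow> bilin_form sc F \<Longrightarrow> contract F s = contract F t"
  using alg by (intro vector_space.teq2_imp_contract_eq) (auto simp: k_algebra_def)

lemma lin_fun_contract_D:
  assumes "bilin_form sc F"
  shows "lin_fun sc (\<lambda>q. contract F (D p q))"
proof -
  have add: "teq2 sc (D p (x + y)) (D p x @ D p y)"
    and scale: "teq2 sc (D p (sc c x)) (smult2 sc c (D p x))" for x y c
    using db by (simp_all add: is_double_bracket_def)
  show ?thesis
    unfolding lin_fun_def using teq2_contract[OF add assms] teq2_contract[OF scale assms]
    by (simp add: contract_smult2[OF assms])
qed

lemma contract_D_swap: "bilin_form sc F \<Longrightarrow> contract F (D a b) = - contract (\<lambda>x y. F y x) (D b a)"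
  using db teq2_contract[of "D a b" "neg2 (flip2 (D b a))" F]
  by (simp add: is_double_bracket_def contract_neg2 contract_flip2)

lemma contract_D_mult:
  assumes "bilin_form sc F"
  shows "contract F (D p (u * v)) =
    contract (\<lambda>x y. F (u * x) y) (D p v) + contract (\<lambda>x y. F x (y * v)) (D p u)"
proof -
  have "teq2 sc (D p (u * v))
      (map (\<lambda>(x, y). (u * x, y)) (D p v) @ map (\<lambda>(x, y). (x, y * v)) (D p u))"
    using db by (simp add: is_double_bracket_def)
  then show ?thesis
    by (simp add: teq2_contract[OF _ assms] contract_map)
qed

lemma contract_D_mult2:
  assumes "bilin_form sc F"
  shows "contract F (D p (mult2 t)) =
    contract (\<lambda>u v. contract (\<lambda>x y. F (u * x) y) (D p v) + contract (\<lambda>x y. F x (y * v)) (D p u)) t"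
proof -
  have "contract F (D p (mult2 t)) = contract (\<lambda>u v. contract F (D p (u * v))) t"
    unfolding mult2_def lin_fun_sum_list[OF lin_fun_contract_D[OF assms]]
    by (simp add: contract_def case_prod_unfold comp_def)
  then show ?thesis
    by (simp add: contract_D_mult[OF assms])
qed

lemma lin_fun_br: "lin_fun sc \<phi> \<Longrightarrow> lin_fun sc (\<lambda>p. \<phi> (br D a p))"
proof -
  assume \<phi>: "lin_fun sc \<phi>"
  have "bilin_form sc (\<lambda>x y. \<phi> (x * y))"
    using lin_fun_mult_left[OF alg \<phi>] lin_fun_mult_right[OF alg \<phi>] by (simp add: bilin_form_def)
  then show ?thesis
    using lin_fun_contract_D by (simp add: br_def lin_fun_mult2[OF \<phi>])
qed

lemma bilin_form_contract_D:
  assumes "\<And>q. bilin_form sc (G q)" and "\<And>x y. lin_fun sc (\<lambda>q. G q x y)"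
  shows "bilin_form sc (\<lambda>p q. contract (G q) (D c p))"
  unfolding bilin_form_def
  using lin_fun_contract_D[OF assms(1)] lin_fun_contract[of sc G, OF assms(2)] by blast

lemma contract_brT_D_minus_D_br_expand:
  assumes F: "bilin_form sc F"
  shows "contract F (brT D a (D b c) @ neg2 (D (br D a b) c) @ neg2 (D b (br D a c))) =
      contract (\<lambda>u v. F (br D a u) v + F u (br D a v)) (D b c)
    + contract (\<lambda>u v. contract (\<lambda>x y. F y (u * x)) (D c v)
        + contract (\<lambda>x y. F (y * v) x) (D c u)) (D a b)
    - contract (\<lambda>u v. contract (\<lambda>x y. F (u * x) y) (D b v)
        + contract (\<lambda>x y. F x (y * v)) (D b u)) (D a c)"
  using contract_D_swap[OF F, of "br D a b" c]
  by (simp add: contract_brT contract_neg2[OF F] contract_D_mult2[OF F, of _ "D a _", folded br_def]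
      contract_D_mult2[OF bilin_form_swap[OF F], of _ "D a _", folded br_def])

lemma contract_m_1_tri:
  assumes F: "bilin_form sc F"
  shows "contract F (m_1 (tri D a b c)) =
      contract (\<lambda>u v. F (br D a u) v) (D b c)
    - contract (\<lambda>u v. contract (\<lambda>x y. F (u * x) y) (D b v)) (D a c)
    + contract (\<lambda>u v. contract (\<lambda>x y. F (y * v) x) (D c u)) (D a b)"
proof -
  have "contract (\<lambda>u v. contract (\<lambda>x y. F (x * y) v) (D a u)) (D b c) =
      contract (\<lambda>u v. F (br D a u) v) (D b c)"
    using F lin_fun_mult2[of sc "\<lambda>x. F x _"] by (simp add: br_def bilin_form_def)
  moreover have "bilin_form sc (\<lambda>u v. contract (\<lambda>x y. F (v * x) y) (D b u))"
    using F lin_fun_mult_right[OF alg, of "\<lambda>z. F z _"]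
    by (intro bilin_form_contract_D bilin_form_mult_left_fst[OF alg]) (auto simp: bilin_form_def)
  ultimately show ?thesis
    by (simp add: tri_def contract_m_1 contract3_tau123 contract3_tau132 contract3_dblL
        contract_D_swap[of _ c a])
qed

lemma contract_one_m_tri:
  assumes F: "bilin_form sc F"
  shows "contract F (one_m (tri D b a c)) =
      contract (\<lambda>u v. contract (\<lambda>x y. F x (y * v)) (D b u)) (D a c)
    - contract (\<lambda>u v. F u (br D a v)) (D b c)
    - contract (\<lambda>u v. contract (\<lambda>x y. F y (u * x)) (D c v)) (D a b)"
proof -
  have "contract (\<lambda>u v. contract (\<lambda>x y. F v (x * y)) (D a u)) (D c b) =
      contract (\<lambda>u v. F v (br D a u)) (D c b)"
    using F lin_fun_mult2[of sc "F _"] by (simp add: br_def bilin_form_def)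
  moreover have "bilin_form sc (\<lambda>u v. F v (br D a u))"
    using F lin_fun_br[of "F _"] by (simp add: bilin_form_def)
  moreover have "bilin_form sc (\<lambda>u v. contract (\<lambda>x y. F y (v * x)) (D c u))"
    using bilin_form_swap[OF bilin_form_mult_left_snd[OF alg F]] F lin_fun_mult_right[OF alg, of "F _"]
    by (intro bilin_form_contract_D) (auto simp: bilin_form_def)
  ultimately show ?thesis
    by (simp add: tri_def contract_one_m contract3_tau123 contract3_tau132 contract3_dblL
        contract_D_swap[of _ c b] contract_D_swap[of _ b a])
qed

lemma contract_brT_D_minus_D_br_eq_tri:
  assumes F: "bilin_form sc F"
  shows "contract F (brT D a (D b c) @ neg2 (D (br D a b) c) @ neg2 (D b (br D a c))) =
    contract F (m_1 (tri D a b c) @ neg2 (one_m (tri D b a c)))"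
proof -
  have rhs: "contract F (m_1 (tri D a b c) @ neg2 (one_m (tri D b a c))) =
      contract F (m_1 (tri D a b c)) - contract F (one_m (tri D b a c))"
    by (simp add: contract_neg2[OF F])
  show ?thesis
    unfolding contract_brT_D_minus_D_br_expand[OF F] rhs contract_m_1_tri[OF F] contract_one_m_tri[OF F]
      contract_add
    by (simp add: algebra_simps)
qed

end

theorem proposition2p4p2:
  fixes sc :: "'k::field_char_0 \<Rightarrow> 'a::ring_1 \<Rightarrow> 'a"
    and D :: "'a \<Rightarrow> 'a \<Rightarrow> ('a \<times> 'a) list"
    and a b c :: 'a
  assumes "k_algebra sc"
    and "is_double_bracket sc D"
  shows "teq2 sc
     (brT D a (D b c) @ neg2 (D (br D a b) c) @ neg2 (D b (br D a c)))
     (m_1 (tri D a b c) @ neg2 (one_m (tri D b a c)))"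
  using contract_brT_D_minus_D_br_eq_tri[OF assms bilin_form_prod]
  by (simp add: teq2_def ev2_eq_contract)

end
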